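(* Let $\varphi$ be a finite conjunction of literals of the two forms $x\in y$ and $x = y\setminus z$ (with $x,y,z$ set variables), with finite set of variables $\mathrm{Vars}(\varphi)$, and let $\bar n=|\mathrm{Vars}(\varphi)|$. Let $M$ be a set assignment over $\mathrm{Vars}(\varphi)$ satisfying $\varphi$; let $\bar x,\bar y\in\mathrm{Vars}(\varphi)$, let $\overline{M}$ be a set assignment over $\mathrm{Vars}(\varphi)$ satisfying $\varphi$ with $\overline{M}\bar x\neq \overline{M}\bar y$, and let $\mathfrak{t}$ be a set belonging to exactly one of $\overline{M}\bar x$, $\overline{M}\bar y$. Fix a set $\mathfrak{s}$ with $\mathrm{rk}(\mathfrak{s})>\mathrm{rk}(M)$. Define $\mathsf{V}_0=\{u\in\mathrm{Vars}(\varphi)\mid \mathfrak{t}\in\overline{M}u\}$; $\mathsf{V}_n=\{u\in\mathrm{Vars}(\varphi)\mid Mu\cap\{Mw\mid w\in\mathsf{V}_{n-1}\}\neq\emptyset\}$ for $n\ge1$; $M_0v=Mv\cup\{\mathfrak{s}\}$ if $v\in\mathsf{V}_0$ and $M_0v=Mv$ otherwise; for $n\ge1$, $M_nv=M_{n-1}v\cup\{M_{n-1}u\mid u\in\mathsf{V}_{n-1},\ Mu\in Mv\}$ if $v\in\mathsf{V}_n$ and $M_nv=M_{n-1}v$ otherwise. Then $M_{\bar n}\bar x\neq M_{\bar n}\bar y$.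
   Context: A set assignment is a map from a finite set of set variables into the von Neumann universe $\mathcal{V}=\bigcup_\alpha\mathcal{V}_\alpha$, $\mathcal{V}_\alpha=\bigcup_{\beta<\alpha}\mathcal{P}(\mathcal{V}_\beta)$; it satisfies $x\in y$ iff $Mx\in My$ and $x=y\setminus z$ iff $Mx=My\setminus Mz$. The rank $\mathrm{rk}(s)$ of a set $s$ is the least ordinal $\alpha$ with $s\subseteq\mathcal{V}_\alpha$, and $\mathrm{rk}(M)=\max\{\mathrm{rk}(Mx)\mid x\in\mathrm{dom}(M)\}$. *)

theory Defs
  imports Main
begin

text \<open>A universe of well-founded sets is modelled abstractly by a carrier type 'v with an
  element map elts (x \<in> y is read as x \<in> elts y).  The von Neumann universe is an instance.\<close>

definition set_universe :: "('v \<Rightarrow> 'v set) \<Rightarrow> bool" where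
  "set_universe elts \<longleftrightarrow>
     inj elts \<and> wf {(x, y). x \<in> elts y} \<and>
     (\<forall>x F. finite F \<longrightarrow> (\<exists>y. elts y = elts x \<union> F))"

definition mkset :: "('v \<Rightarrow> 'v set) \<Rightarrow> 'v set \<Rightarrow> 'v" where
  "mkset elts A = (SOME y. elts y = A)"

text \<open>Rank comparison rk a \<le> rk b, by well-founded recursion on a:
  rk a \<le> rk b iff every element of a has rank \<le> some element of b
  (since rk a = sup of (rk x + 1) over elements x of a).\<close>
definition rk_le :: "('v \<Rightarrow> 'v set) \<Rightarrow> 'v \<Rightarrow> 'v \<Rightarrow> bool" where
  "rk_le elts = wfrec {(x, y). x \<in> elts y} (\<lambda>f a b. \<forall>x\<in>elts a. \<exists>y\<in>elts b. f x y)"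

definition rk_lt :: "('v \<Rightarrow> 'v set) \<Rightarrow> 'v \<Rightarrow> 'v \<Rightarrow> bool" where
  "rk_lt elts a b \<longleftrightarrow> rk_le elts a b \<and> \<not> rk_le elts b a"

datatype 'x literal = Mem 'x 'x | Diff 'x 'x 'x

fun lit_vars :: "'x literal \<Rightarrow> 'x set" where
  "lit_vars (Mem x y) = {x, y}"
| "lit_vars (Diff x y z) = {x, y, z}"

definition Vars :: "'x literal list \<Rightarrow> 'x set" where
  "Vars \<phi> = (\<Union>l\<in>set \<phi>. lit_vars l)"

fun lit_holds :: "('v \<Rightarrow> 'v set) \<Rightarrow> ('x \<Rightarrow> 'v) \<Rightarrow> 'x literal \<Rightarrow> bool" where
  "lit_holds elts M (Mem x y) \<longleftrightarrow> M x \<in> elts (M y)"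
| "lit_holds elts M (Diff x y z) \<longleftrightarrow> elts (M x) = elts (M y) - elts (M z)"

definition satisfies :: "('v \<Rightarrow> 'v set) \<Rightarrow> ('x \<Rightarrow> 'v) \<Rightarrow> 'x literal list \<Rightarrow> bool" where
  "satisfies elts M \<phi> \<longleftrightarrow> (\<forall>l\<in>set \<phi>. lit_holds elts M l)"

primrec Vseq :: "('v \<Rightarrow> 'v set) \<Rightarrow> 'x literal list \<Rightarrow> ('x \<Rightarrow> 'v) \<Rightarrow> ('x \<Rightarrow> 'v) \<Rightarrow> 'v
                 \<Rightarrow> nat \<Rightarrow> 'x set" where
  "Vseq elts \<phi> M Mb t 0 = {u \<in> Vars \<phi>. t \<in> elts (Mb u)}"
| "Vseq elts \<phi> M Mb t (Suc n) =
     {u \<in> Vars \<phi>. elts (M u) \<inter> {M w | w. w \<in> Vseq elts \<phi> M Mb t n} \<noteq> {}}"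

primrec Mseq :: "('v \<Rightarrow> 'v set) \<Rightarrow> 'x literal list \<Rightarrow> ('x \<Rightarrow> 'v) \<Rightarrow> ('x \<Rightarrow> 'v) \<Rightarrow> 'v \<Rightarrow> 'v
                 \<Rightarrow> nat \<Rightarrow> 'x \<Rightarrow> 'v" where
  "Mseq elts \<phi> M Mb t s 0 = (\<lambda>v. if v \<in> Vseq elts \<phi> M Mb t 0
       then mkset elts (elts (M v) \<union> {s}) else M v)"
| "Mseq elts \<phi> M Mb t s (Suc n) = (\<lambda>v. if v \<in> Vseq elts \<phi> M Mb t (Suc n)
       then mkset elts (elts (Mseq elts \<phi> M Mb t s n v) \<union>
              {Mseq elts \<phi> M Mb t s n u | u. u \<in> Vseq elts \<phi> M Mb t n \<and> M u \<in> elts (M v)})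
       else Mseq elts \<phi> M Mb t s n v)"

end

theory Submission
  imports Defs
begin

text \<open>The fresh set s is put into M_0 v exactly for the variables v \<in> V_0, i.e. those with
  t \<in> Mbar v, and it is never added later: every later new element is some M_n u, which is
  either M u, of rank below s, or has s in its transitive closure and so, by well-foundedness
  of \<in>, differs from s.  Hence s \<in> M_n v iff t \<in> Mbar v, and t separates xbar from ybar.\<close>

abbreviation mem_rel :: "('v \<Rightarrow> 'v set) \<Rightarrow> ('v \<times> 'v) set" where
  "mem_rel elts \<equiv> {(x, y). x \<in> elts y}"

lemma rk_le_unfold:
  assumes "wf (mem_rel elts)"
  shows "rk_le elts a b \<longleftrightarrow> (\<forall>x\<in>elts a. \<exists>y\<in>elts b. rk_le elts x y)"
  unfolding rk_le_def by (subst wfrec[OF assms]) (simp add: cut_apply)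

lemma rk_le_refl:
  assumes wf: "wf (mem_rel elts)"
  shows "rk_le elts a a"
proof (induction a rule: wf_induct[OF wf])
  case (1 a)
  then have "\<forall>x\<in>elts a. rk_le elts x x"
    by simp
  then show ?case
    by (subst rk_le_unfold[OF wf]) blast
qed

lemma rk_le_of_mem:
  assumes wf: "wf (mem_rel elts)"
  shows "x \<in> elts b \<Longrightarrow> rk_le elts x b"
proof (induction x arbitrary: b rule: wf_induct[OF wf])
  case (1 x)
  then have "\<forall>z\<in>elts x. rk_le elts z x"
    by simp
  with \<open>x \<in> elts b\<close> show ?case
    by (subst rk_le_unfold[OF wf]) blast
qed

lemma rk_lt_imp_neq:
  assumes "wf (mem_rel elts)" "rk_lt elts a b"
  shows "a \<noteq> b"
  using assms(2) rk_le_refl[OF assms(1), of a] unfolding rk_lt_def by auto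

lemma rk_lt_imp_not_mem:
  assumes "wf (mem_rel elts)" "rk_lt elts a b"
  shows "b \<notin> elts a"
  using assms(2) rk_le_of_mem[OF assms(1), of b a] unfolding rk_lt_def by auto

lemma set_universe_wf: "set_universe elts \<Longrightarrow> wf (mem_rel elts)"
  unfolding set_universe_def by blast

lemma set_universe_elts_eq_iff: "set_universe elts \<Longrightarrow> elts x = elts y \<longleftrightarrow> x = y"
  unfolding set_universe_def by (auto dest: injD)

lemma elts_mkset_union:
  assumes "set_universe elts" "finite F"
  shows "elts (mkset elts (elts x \<union> F)) = elts x \<union> F"
proof -
  from assms obtain y where "elts y = elts x \<union> F" unfolding set_universe_def by blast
  then show ?thesis unfolding mkset_def by (rule someI)
qed

lemma trancl_mem_rel_subset:
  assumes "(s, y) \<in> (mem_rel elts)\<^sup>+" "elts y \<subseteq> elts z"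
  shows "(s, z) \<in> (mem_rel elts)\<^sup>+"
proof -
  obtain w where sw: "(s, w) \<in> (mem_rel elts)\<^sup>*" and "(w, y) \<in> mem_rel elts"
    using tranclD2[OF assms(1)] by blast
  with assms(2) have "(w, z) \<in> mem_rel elts"
    by auto
  with sw show ?thesis
    by (rule rtrancl_into_trancl1)
qed

lemma finite_Vars: "finite (Vars \<phi>)"
proof -
  have "finite (lit_vars l)" for l :: "'x literal" by (cases l) auto
  then show ?thesis unfolding Vars_def by auto
qed

lemma Vseq_subset_Vars: "Vseq elts \<phi> M Mb t n \<subseteq> Vars \<phi>"
  by (cases n) auto

declare Vseq.simps [simp del] Mseq.simps [simp del]

locale fresh_set_augmentation =
  fixes elts :: "'v \<Rightarrow> 'v set" and \<phi> :: "'x literal list"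
    and M Mb :: "'x \<Rightarrow> 'v" and t s :: 'v
  assumes univ: "set_universe elts"
begin

abbreviation V :: "nat \<Rightarrow> 'x set" where
  "V \<equiv> Vseq elts \<phi> M Mb t"

abbreviation N :: "nat \<Rightarrow> 'x \<Rightarrow> 'v" where
  "N \<equiv> Mseq elts \<phi> M Mb t s"

(* s occurs in N, so blast and auto loop substituting an equation s = N n u;
   such steps are done by hand below. *)

lemma Mseq_0_notin_V: "v \<notin> V 0 \<Longrightarrow> N 0 v = M v"
  by (simp add: Mseq.simps)

lemma elts_Mseq_0:
  "elts (N 0 v) = (if v \<in> V 0 then insert s (elts (M v)) else elts (M v))"
  using elts_mkset_union[OF univ, of "{s}" "M v"] by (simp add: Mseq.simps)

lemma elts_Mseq_Suc:
  "elts (N (Suc n) v) = elts (N n v) \<union>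
     (if v \<in> V (Suc n) then {N n u | u. u \<in> V n \<and> M u \<in> elts (M v)} else {})"
proof -
  have "{N n u | u. u \<in> V n \<and> M u \<in> elts (M v)} \<subseteq> N n ` Vars \<phi>"
    using Vseq_subset_Vars[of elts \<phi> M Mb t n] by blast
  then have "finite {N n u | u. u \<in> V n \<and> M u \<in> elts (M v)}"
    using finite_Vars finite_subset by blast
  from elts_mkset_union[OF univ this] show ?thesis
    by (simp add: Mseq.simps)
qed

lemma Mseq_changed_imp_trancl:
  "N n v \<noteq> M v \<Longrightarrow> (s, N n v) \<in> (mem_rel elts)\<^sup>+"
proof (induction n arbitrary: v)
  case 0
  then have "s \<in> elts (N 0 v)"
    using Mseq_0_notin_V elts_Mseq_0 by auto
  then show ?case by auto
next
  case (Suc n)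
  let ?A = "{N n u | u. u \<in> V n \<and> M u \<in> elts (M v)}"
  show ?case
  proof (cases "N n v = M v")
    case False
    have "elts (N n v) \<subseteq> elts (N (Suc n) v)"
      by (simp add: elts_Mseq_Suc)
    with Suc.IH[OF False] show ?thesis
      by (rule trancl_mem_rel_subset)
  next
    case True
    have "elts (N (Suc n) v) \<noteq> elts (M v)"
      using Suc.prems set_universe_elts_eq_iff[OF univ] by blast
    then have v: "v \<in> V (Suc n)" and "\<not> ?A \<subseteq> elts (M v)"
      unfolding elts_Mseq_Suc True by (auto split: if_splits)
    then obtain u where u: "u \<in> V n" "M u \<in> elts (M v)" "N n u \<notin> elts (M v)"
      by blast
    then have "N n u \<noteq> M u"
      by auto
    then have "(s, N n u) \<in> (mem_rel elts)\<^sup>+"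
      by (rule Suc.IH)
    moreover from u v have "(N n u, N (Suc n) v) \<in> mem_rel elts"
      by (auto simp: elts_Mseq_Suc)
    ultimately show ?thesis
      by (rule trancl_into_trancl)
  qed
qed

context
  assumes s_rank: "\<forall>v\<in>Vars \<phi>. rk_lt elts (M v) s"
begin

lemma Mseq_neq_s:
  assumes "u \<in> Vars \<phi>"
  shows "N n u \<noteq> s"
proof
  assume Nu: "N n u = s"
  have "rk_lt elts (M u) s"
    using s_rank assms by blast
  then have "M u \<noteq> s"
    by (rule rk_lt_imp_neq[OF set_universe_wf[OF univ]])
  with Nu have "N n u \<noteq> M u"
    by simp
  then have "(s, N n u) \<in> (mem_rel elts)\<^sup>+"
    by (rule Mseq_changed_imp_trancl)
  then have "(s, s) \<in> (mem_rel elts)\<^sup>+"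
    unfolding Nu .
  moreover have "(s, s) \<notin> (mem_rel elts)\<^sup>+"
    by (rule wf_not_refl[OF wf_trancl[OF set_universe_wf[OF univ]]])
  ultimately show False
    by contradiction
qed

lemma s_mem_Mseq_iff:
  assumes v: "v \<in> Vars \<phi>"
  shows "s \<in> elts (N n v) \<longleftrightarrow> t \<in> elts (Mb v)"
proof (induction n)
  case 0
  have "rk_lt elts (M v) s"
    using s_rank v by blast
  then have "s \<notin> elts (M v)"
    by (rule rk_lt_imp_not_mem[OF set_universe_wf[OF univ]])
  with v show ?case
    by (simp add: elts_Mseq_0 Vseq.simps)
next
  case (Suc n)
  have "s \<noteq> N n u" if "u \<in> V n" for u
  proof -
    from Vseq_subset_Vars that have "u \<in> Vars \<phi>"
      by (rule subsetD)
    from Mseq_neq_s[OF this] show ?thesis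
      by (rule not_sym)
  qed
  then have "s \<notin> {N n u | u. u \<in> V n \<and> M u \<in> elts (M v)}"
    by simp
  with Suc.IH show ?case
    by (simp only: elts_Mseq_Suc Un_iff empty_iff simp_thms split: if_split)
qed

end

end

theorem lemma11:
  fixes elts :: "'v \<Rightarrow> 'v set"
    and \<phi> :: "'x literal list"
    and M Mb :: "'x \<Rightarrow> 'v"
    and xb yb :: 'x
    and t s :: 'v
  assumes univ: "set_universe elts"
    and M_sat: "satisfies elts M \<phi>"
    and Mb_sat: "satisfies elts Mb \<phi>"
    and xb: "xb \<in> Vars \<phi>" and yb: "yb \<in> Vars \<phi>"
    and Mb_ne: "Mb xb \<noteq> Mb yb"
    and t_one: "(t \<in> elts (Mb xb)) \<noteq> (t \<in> elts (Mb yb))"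
    and s_rank: "\<forall>v\<in>Vars \<phi>. rk_lt elts (M v) s"
  shows "Mseq elts \<phi> M Mb t s (card (Vars \<phi>)) xb \<noteq> Mseq elts \<phi> M Mb t s (card (Vars \<phi>)) yb"
proof -
  interpret fresh_set_augmentation elts \<phi> M Mb t s
    by unfold_locales (rule univ)
  show ?thesis
  proof
    assume "N (card (Vars \<phi>)) xb = N (card (Vars \<phi>)) yb"
    then have "s \<in> elts (N (card (Vars \<phi>)) xb) \<longleftrightarrow> s \<in> elts (N (card (Vars \<phi>)) yb)"
      by simp
    with t_one show False
      unfolding s_mem_Mseq_iff[OF s_rank xb] s_mem_Mseq_iff[OF s_rank yb] by simp
  qed
qed

end
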